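(* Let $V\subset\mathbb{R}^3$ be covered by a conforming oriented tetrahedral mesh $\bigcup_e T_e$, let $p\ge2$, and on each element consider the edge, edge-face, face and cell functions listed below, assembled globally so that edge functions are shared by all elements containing that edge, face functions (including edge-face functions of that face) by the two elements sharing that face, and cell functions are local to each element. Then every finite linear combination of the assembled functions lies in $H(\operatorname{sym}\operatorname{Curl},V)$; equivalently, for every interior interface $\Xi$ between two elements with normal $\mathbf{n}$, the jump of $\operatorname{sym}(\mathbf{P}\operatorname{Anti}(\mathbf{n})^T)$ across $\Xi$ vanishes. The element functions on $T$ are: (i) for each edge $j$ and $\varphi\in\mathcal{E}^p_j(T)$: $\varphi\,\mathbf{d}_1\otimes\mathbf{t}$, $\varphi\,\mathbf{d}_2\otimes\mathbf{t}$; (ii) for each face $k$ with normal $\mathbf{n}$, each edge $j$ of face $k$ and $\varphi\in\mathcal{E}^p_j(T)$: $\varphi\,\mathbf{t}\otimes\mathbf{k}$, $\varphi\,\mathbf{m}\otimes\mathbf{k}$, $\varphi\,\mathbf{n}\otimes\mathbf{k}$, with $\mathbf{t}$ the tangent of edge $j$, $\mathbf{k}$ the edge-face vector of edge $j$ satisfying $\mathbf{n}\times\mathbf{k}\ne0$, $\mathbf{m}=\mathbf{Q}\mathbf{k}$, $\mathbf{Q}=\|\mathbf{n}\|^2\mathbb{1}-\mathbf{n}\otimes\mathbf{n}$; (iii) for each face $k$ and $\varphi\in\mathcal{F}^p_k(T)$, with $j=\min\mathcal{J}_k$ and $\mathbf{t},\mathbf{m}$ as in (ii) for edge $j$: $\varphi\,\mathbf{t}\otimes\mathbf{m}$,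 $\varphi\,\mathbf{m}\otimes\mathbf{t}$, $\varphi(\mathbf{t}\otimes\mathbf{t}-\mathbf{m}\otimes\mathbf{m})$, $\varphi\,\mathbf{n}\otimes\mathbf{t}$, $\varphi\,\mathbf{n}\otimes\mathbf{m}$; (iv) cell functions $\varphi\mathbb{1}$ with $\varphi\in\bigoplus_{j}\mathcal{E}^{p+1}_j(T)\oplus\bigoplus_k\mathcal{F}^{p+1}_k(T)\oplus\mathcal{C}^{p+1}(T)$, $\varphi\,\mathbf{t}\otimes\mathbf{n}$, $\varphi\,\mathbf{m}\otimes\mathbf{n}$, $\varphi\,\mathbf{n}\otimes\mathbf{n}$ with $\varphi\in\mathcal{F}^p_k(T)$ (vectors as in (iii)), and $\varphi\mathbf{T}$ with $\varphi\in\mathcal{C}^p(T)$, $\mathbf{T}\in\mathfrak{sl}(3)$.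
   Context: $H(\operatorname{sym}\operatorname{Curl},V)=\{\mathbf{P}\in[L^2(V)]^{3\times3}:\operatorname{sym}\operatorname{Curl}\mathbf{P}\in[L^2(V)]^{3\times3}\}$, where $\operatorname{Curl}\mathbf{P}=-\mathbf{P}\times\nabla$ is the row-wise curl and $\operatorname{sym}\mathbf{A}=\frac12(\mathbf{A}+\mathbf{A}^T)$; $\operatorname{Anti}(\mathbf{v})$ is the skew matrix with $\operatorname{Anti}(\mathbf{v})\mathbf{w}=\mathbf{v}\times\mathbf{w}$; $\mathfrak{sl}(3)$ is the space of trace-free $3\times3$ matrices, $\mathbb{1}$ the identity. Each element $T=\mathbf{x}(\Omega)$ is the non-degenerate image of the reference tetrahedron $\Omega=\{(\xi,\eta,\zeta)\in[0,1]^3:\xi+\eta+\zeta\le1\}$, $\mathbf{J}=\mathrm{D}\mathbf{x}$, with barycentric coordinates $\lambda_1=1-\xi-\eta-\zeta,\lambda_2=\zeta,\lambda_3=\eta,\lambda_4=\xi$. The mesh is oriented: the local vertex numbering of each element is increasing with respect to a fixed global vertex numbering. Edges $\mathcal{J}=\{(1,2),(1,3),(1,4),(2,3),(2,4),(3,4)\}$, faces $\mathcal{K}=\{(1,2,3),(1,2,4),(1,3,4),(2,3,4)\}$, $\mathcal{J}_k$ the edges of face $k$, $\min\mathcal{J}_k$ the lexicographically smallest. Scalar spaces: an $H^1$-conforming hierarchical polytopal basis of $\mathit{P}^q(T)$ consisting of vertex functions $\lambda_i$, edge spaces $\mathcal{E}^q_j(T)$ (dimension $q-1$, vanishing on other edges),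 face spaces $\mathcal{F}^q_k(T)$ (dimension $(q-2)(q-1)/2$, vanishing on other faces), cell space $\mathcal{C}^q(T)$ (dimension $(q-3)(q-2)(q-1)/6$, vanishing on $\partial T$), such that shared edge and face functions coincide on interfaces between neighbouring elements. Vectors: tangents $\mathbf{t}=\mathbf{J}\boldsymbol{\tau}$ with $\boldsymbol{\tau}_{12}=\mathbf{e}_3,\boldsymbol{\tau}_{13}=\mathbf{e}_2,\boldsymbol{\tau}_{14}=\mathbf{e}_1,\boldsymbol{\tau}_{23}=\mathbf{e}_2-\mathbf{e}_3,\boldsymbol{\tau}_{24}=\mathbf{e}_1-\mathbf{e}_3,\boldsymbol{\tau}_{34}=\mathbf{e}_1-\mathbf{e}_2$; edge-face vectors $\mathbf{k}=\mathbf{J}^{-T}\boldsymbol{\kappa}$ with reference pairs $(1,2):\{-\mathbf{e}_2,-\mathbf{e}_1\}$, $(1,3):\{\mathbf{e}_3,-\mathbf{e}_1\}$, $(1,4):\{\mathbf{e}_3,\mathbf{e}_2\}$, $(2,3):\{\mathbf{e}_1+\mathbf{e}_2+\mathbf{e}_3,-\mathbf{e}_1\}$, $(2,4):\{\mathbf{e}_1+\mathbf{e}_2+\mathbf{e}_3,\mathbf{e}_2\}$, $(3,4):\{\mathbf{e}_1+\mathbf{e}_2+\mathbf{e}_3,-\mathbf{e}_3\}$; face normals $\mathbf{n}=(\det\mathbf{J})\mathbf{J}^{-T}\boldsymbol{\nu}$ with $\boldsymbol{\nu}_{123}=-\mathbf{e}_1,\boldsymbol{\nu}_{124}=\mathbf{e}_2,\boldsymbol{\nu}_{134}=-\mathbf{e}_3,\boldsymbol{\nu}_{234}=-\mathbf{e}_1-\mathbf{e}_2-\mathbf{e}_3$;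 for an edge with tangent $\mathbf{t}=(t_1,t_2,t_3)$, $\mathbf{d}_2=(\operatorname{sgn}_*(t_1)|t_3|,\operatorname{sgn}_*(t_2)|t_3|,-\operatorname{sgn}_*(t_3)(|t_1|+|t_2|))^T$ with $\operatorname{sgn}_*(x)=1$ if $x\ge0$, $-1$ otherwise, and $\mathbf{d}_1=\mathbf{d}_2\times\mathbf{t}$. *)

theory Defs
  imports "HOL-Analysis.Analysis"
begin

type_synonym vec3 = "real^3"
type_synonym mat3 = "real^3^3"

definition vec3 :: "real \<Rightarrow> real \<Rightarrow> real \<Rightarrow> vec3" where
  "vec3 a b c = vector [a, b, c]"

definition e1v :: vec3 where "e1v = vec3 1 0 0"
definition e2v :: vec3 where "e2v = vec3 0 1 0"
definition e3v :: vec3 where "e3v = vec3 0 0 1"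

definition outer :: "vec3 \<Rightarrow> vec3 \<Rightarrow> mat3" where
  "outer a b = (\<chi> i j. a $ i * b $ j)"

definition symm :: "mat3 \<Rightarrow> mat3" where
  "symm A = (1/2) *\<^sub>R (A + transpose A)"

text \<open>Anti v is the skew matrix with Anti v w = v cross w\<close>
definition Anti :: "vec3 \<Rightarrow> mat3" where
  "Anti v = vector [vec3 0 (- v$3) (v$2), vec3 (v$3) 0 (- v$1), vec3 (- v$2) (v$1) 0]"

definition sgn_star :: "real \<Rightarrow> real" where
  "sgn_star x = (if x \<ge> 0 then 1 else -1)"

definition d2vec :: "vec3 \<Rightarrow> vec3" where
  "d2vec t = vec3 (sgn_star (t$1) * \<bar>t$3\<bar>) (sgn_star (t$2) * \<bar>t$3\<bar>)
                  (- sgn_star (t$3) * (\<bar>t$1\<bar> + \<bar>t$2\<bar>))"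

definition d1vec :: "vec3 \<Rightarrow> vec3" where
  "d1vec t = cross3 (d2vec t) t"

text \<open>An element is given by its four global vertex numbers (v1,v2,v3,v4); its
  local vertex i is the i-th component.
  X assigns to every global vertex number its position.\<close>
type_synonym elem = "nat \<times> nat \<times> nat \<times> nat"

definition gv :: "elem \<Rightarrow> nat \<Rightarrow> nat" where
  "gv e i = (case e of (a, b, c, d) \<Rightarrow>
      (if i = 1 then a else if i = 2 then b else if i = 3 then c else d))"

definition locEdges :: "(nat \<times> nat) list" where
  "locEdges = [(1,2),(1,3),(1,4),(2,3),(2,4),(3,4)]"

definition locFaces :: "(nat \<times> nat \<times> nat) list" where
  "locFaces = [(1,2,3),(1,2,4),(1,3,4),(2,3,4)]"

definition faceEdges :: "nat \<times> nat \<times> nat \<Rightarrow> (nat \<times> nat) set" where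
  "faceEdges k = (case k of (a, b, c) \<Rightarrow> {(a,b),(a,c),(b,c)})"

definition minEdge :: "nat \<times> nat \<times> nat \<Rightarrow> nat \<times> nat" where
  "minEdge k = (case k of (a, b, c) \<Rightarrow> (a, b))"

definition ge :: "elem \<Rightarrow> nat \<times> nat \<Rightarrow> nat \<times> nat" where
  "ge e j = (gv e (fst j), gv e (snd j))"

definition gf :: "elem \<Rightarrow> nat \<times> nat \<times> nat \<Rightarrow> nat \<times> nat \<times> nat" where
  "gf e k = (case k of (a, b, c) \<Rightarrow> (gv e a, gv e b, gv e c))"

definition tet :: "(nat \<Rightarrow> vec3) \<Rightarrow> elem \<Rightarrow> vec3 set" where
  "tet X e = convex hull {X (gv e 1), X (gv e 2), X (gv e 3), X (gv e 4)}"

definition edgeSet :: "(nat \<Rightarrow> vec3) \<Rightarrow> nat \<times> nat \<Rightarrow> vec3 set" where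
  "edgeSet X g = closed_segment (X (fst g)) (X (snd g))"

definition faceSet :: "(nat \<Rightarrow> vec3) \<Rightarrow> nat \<times> nat \<times> nat \<Rightarrow> vec3 set" where
  "faceSet X f = (case f of (a, b, c) \<Rightarrow> convex hull {X a, X b, X c})"

definition vertsOf :: "elem \<Rightarrow> nat set" where
  "vertsOf e = {gv e 1, gv e 2, gv e 3, gv e 4}"

text \<open>Jacobian of x(xi,eta,zeta) = X v1 + xi (X v4 - X v1) + eta (X v3 - X v1)
  + zeta (X v2 - X v1), which realises lambda1 = 1-xi-eta-zeta, lambda2 = zeta,
  lambda3 = eta, lambda4 = xi.\<close>
definition Jmat :: "(nat \<Rightarrow> vec3) \<Rightarrow> elem \<Rightarrow> mat3" where
  "Jmat X e = transpose (vector [X (gv e 4) - X (gv e 1), X (gv e 3) - X (gv e 1),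
                                  X (gv e 2) - X (gv e 1)])"

definition refMap :: "(nat \<Rightarrow> vec3) \<Rightarrow> elem \<Rightarrow> vec3 \<Rightarrow> vec3" where
  "refMap X e xi = X (gv e 1) + Jmat X e *v xi"

definition bary :: "(nat \<Rightarrow> vec3) \<Rightarrow> elem \<Rightarrow> nat \<Rightarrow> vec3 \<Rightarrow> real" where
  "bary X e i x = (let xi = matrix_inv (Jmat X e) *v (x - X (gv e 1)) in
     (if i = 1 then 1 - xi$1 - xi$2 - xi$3 else if i = 2 then xi$3
      else if i = 3 then xi$2 else xi$1))"

definition oriented_conforming_mesh :: "(nat \<Rightarrow> vec3) \<Rightarrow> elem set \<Rightarrow> bool" where
  "oriented_conforming_mesh X Els \<longleftrightarrow> finite Els \<and>
     (\<forall>e\<in>Els. gv e 1 < gv e 2 \<and> gv e 2 < gv e 3 \<and> gv e 3 < gv e 4 \<and> det (Jmat X e) \<noteq> 0) \<and>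
     (\<forall>e1\<in>Els. \<forall>e2\<in>Els. e1 \<noteq> e2 \<longrightarrow>
        tet X e1 \<inter> tet X e2 = convex hull (X ` (vertsOf e1 \<inter> vertsOf e2)))"

definition meshDomain :: "(nat \<Rightarrow> vec3) \<Rightarrow> elem set \<Rightarrow> vec3 set" where
  "meshDomain X Els = (\<Union>e\<in>Els. tet X e)"

definition tauRef :: "nat \<times> nat \<Rightarrow> vec3" where
  "tauRef j = (if j = (1,2) then e3v else if j = (1,3) then e2v else if j = (1,4) then e1v
     else if j = (2,3) then e2v - e3v else if j = (2,4) then e1v - e3v else e1v - e2v)"

definition kappaRef :: "nat \<times> nat \<Rightarrow> vec3 \<times> vec3" where
  "kappaRef j = (if j = (1,2) then (- e2v, - e1v) else if j = (1,3) then (e3v, - e1v)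
     else if j = (1,4) then (e3v, e2v)
     else if j = (2,3) then (e1v + e2v + e3v, - e1v)
     else if j = (2,4) then (e1v + e2v + e3v, e2v) else (e1v + e2v + e3v, - e3v))"

definition nuRef :: "nat \<times> nat \<times> nat \<Rightarrow> vec3" where
  "nuRef k = (if k = (1,2,3) then - e1v else if k = (1,2,4) then e2v
     else if k = (1,3,4) then - e3v else - (e1v + e2v + e3v))"

definition tvec :: "(nat \<Rightarrow> vec3) \<Rightarrow> elem \<Rightarrow> nat \<times> nat \<Rightarrow> vec3" where
  "tvec X e j = Jmat X e *v tauRef j"

definition nvec :: "(nat \<Rightarrow> vec3) \<Rightarrow> elem \<Rightarrow> nat \<times> nat \<times> nat \<Rightarrow> vec3" where
  "nvec X e k = det (Jmat X e) *\<^sub>R (transpose (matrix_inv (Jmat X e)) *v nuRef k)"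

definition kvec :: "(nat \<Rightarrow> vec3) \<Rightarrow> elem \<Rightarrow> nat \<times> nat \<times> nat \<Rightarrow> nat \<times> nat \<Rightarrow> vec3" where
  "kvec X e k j = (let Jit = transpose (matrix_inv (Jmat X e));
      ka = Jit *v fst (kappaRef j); kb = Jit *v snd (kappaRef j) in
      (if cross3 (nvec X e k) ka \<noteq> 0 then ka else kb))"

definition Qmat :: "vec3 \<Rightarrow> mat3" where
  "Qmat n = (norm n)\<^sup>2 *\<^sub>R mat 1 - outer n n"

definition mvec :: "(nat \<Rightarrow> vec3) \<Rightarrow> elem \<Rightarrow> nat \<times> nat \<times> nat \<Rightarrow> nat \<times> nat \<Rightarrow> vec3" where
  "mvec X e k j = Qmat (nvec X e k) *v kvec X e k j"

text \<open>Scalar functions are given globally (assembled): edgeFun q g i is the i-th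
  degree-q edge function of global edge g, faceFun q f i of global face f,
  cellFun q e i the i-th cell function of element e.\<close>

definition poly_on :: "vec3 set \<Rightarrow> nat \<Rightarrow> (vec3 \<Rightarrow> real) \<Rightarrow> bool" where
  "poly_on S q f \<longleftrightarrow> (\<exists>c :: nat \<Rightarrow> nat \<Rightarrow> nat \<Rightarrow> real. \<forall>x\<in>S.
     f x = (\<Sum>(a, b, d) \<in> {(a, b, d). a + b + d \<le> q}. c a b d * (x$1)^a * (x$2)^b * (x$3)^d))"

datatype sidx = SV nat | SE "nat \<times> nat" nat | SF "nat \<times> nat \<times> nat" nat | SC nat

definition sIdx :: "nat \<Rightarrow> sidx set" where
  "sIdx q = {SV i | i. i \<in> {1..4}} \<union> {SE j i | j i. j \<in> set locEdges \<and> i < q - 1}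
     \<union> {SF k i | k i. k \<in> set locFaces \<and> i < (q - 2) * (q - 1) div 2}
     \<union> {SC i | i. i < (q - 3) * (q - 2) * (q - 1) div 6}"

definition sFam ::
  "(nat \<Rightarrow> vec3) \<Rightarrow> nat \<Rightarrow> (nat \<Rightarrow> nat \<times> nat \<Rightarrow> nat \<Rightarrow> vec3 \<Rightarrow> real)
   \<Rightarrow> (nat \<Rightarrow> nat \<times> nat \<times> nat \<Rightarrow> nat \<Rightarrow> vec3 \<Rightarrow> real) \<Rightarrow> (nat \<Rightarrow> elem \<Rightarrow> nat \<Rightarrow> vec3 \<Rightarrow> real)
   \<Rightarrow> elem \<Rightarrow> sidx \<Rightarrow> vec3 \<Rightarrow> real" where
  "sFam X q edgeFun faceFun cellFun e s = (case s of
      SV i \<Rightarrow> bary X e i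
    | SE j i \<Rightarrow> edgeFun q (ge e j) i
    | SF k i \<Rightarrow> faceFun q (gf e k) i
    | SC i \<Rightarrow> cellFun q e i)"

definition hier_basis ::
  "(nat \<Rightarrow> vec3) \<Rightarrow> elem set \<Rightarrow> nat \<Rightarrow> (nat \<Rightarrow> nat \<times> nat \<Rightarrow> nat \<Rightarrow> vec3 \<Rightarrow> real)
   \<Rightarrow> (nat \<Rightarrow> nat \<times> nat \<times> nat \<Rightarrow> nat \<Rightarrow> vec3 \<Rightarrow> real) \<Rightarrow> (nat \<Rightarrow> elem \<Rightarrow> nat \<Rightarrow> vec3 \<Rightarrow> real) \<Rightarrow> bool" where
  "hier_basis X Els q edgeFun faceFun cellFun \<longleftrightarrow>
    (\<forall>e\<in>Els.
      \<comment> \<open>the local functions form a basis of P^q(T)\<close>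
      (\<forall>s\<in>sIdx q. poly_on (tet X e) q (sFam X q edgeFun faceFun cellFun e s)) \<and>
      (\<forall>g. poly_on (tet X e) q g \<longrightarrow>
         (\<exists>!c. (\<forall>s. s \<notin> sIdx q \<longrightarrow> c s = 0) \<and>
               (\<forall>x\<in>tet X e. g x = (\<Sum>s\<in>sIdx q. c s * sFam X q edgeFun faceFun cellFun e s x)))) \<and>
      \<comment> \<open>edge functions vanish on the other edges of T\<close>
      (\<forall>j\<in>set locEdges. \<forall>j'\<in>set locEdges. \<forall>i<q - 1. j' \<noteq> j \<longrightarrow>
         (\<forall>x\<in>edgeSet X (ge e j'). edgeFun q (ge e j) i x = 0)) \<and>
      \<comment> \<open>face functions vanish on the other faces of T\<close>
      (\<forall>k\<in>set locFaces. \<forall>k'\<in>set locFaces. \<forall>i<(q - 2) * (q - 1) div 2. k' \<noteq> k \<longrightarrow>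
         (\<forall>x\<in>faceSet X (gf e k'). faceFun q (gf e k) i x = 0)) \<and>
      \<comment> \<open>cell functions vanish on the boundary of T\<close>
      (\<forall>k\<in>set locFaces. \<forall>i<(q - 3) * (q - 2) * (q - 1) div 6.
         (\<forall>x\<in>faceSet X (gf e k). cellFun q e i x = 0)) \<and>
      \<comment> \<open>assembly: a shared function is zero on elements not containing its entity\<close>
      (\<forall>g i. g \<notin> ge e ` set locEdges \<longrightarrow> (\<forall>x\<in>tet X e. edgeFun q g i x = 0)) \<and>
      (\<forall>f i. f \<notin> gf e ` set locFaces \<longrightarrow> (\<forall>x\<in>tet X e. faceFun q f i x = 0)) \<and>
      (\<forall>e'\<in>Els. \<forall>i. e' \<noteq> e \<longrightarrow> (\<forall>x\<in>tet X e. cellFun q e' i x = 0)))"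

datatype bidx =
    BEdge "nat \<times> nat" nat nat                  \<comment> \<open>global edge, scalar index, d1/d2 (1/2)\<close>
  | BEdgeFace "nat \<times> nat \<times> nat" "nat \<times> nat" nat nat \<comment> \<open>global face, global edge, index, kind t/m/n (0/1/2)\<close>
  | BFace "nat \<times> nat \<times> nat" nat nat           \<comment> \<open>global face, index, kind 0..4\<close>
  | BCellE elem "nat \<times> nat" nat                \<comment> \<open>phi Id, phi in E^(p+1)_j(T)\<close>
  | BCellF elem "nat \<times> nat \<times> nat" nat         \<comment> \<open>phi Id, phi in F^(p+1)_k(T)\<close>
  | BCellC elem nat                           \<comment> \<open>phi Id, phi in C^(p+1)(T)\<close>
  | BCellFN elem "nat \<times> nat \<times> nat" nat nat     \<comment> \<open>local face, index, kind t/m/n tensor n\<close>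
  | BCellSl elem nat mat3                     \<comment> \<open>phi T, phi in C^p(T), T in sl(3)\<close>

definition validIdx :: "elem set \<Rightarrow> nat \<Rightarrow> bidx \<Rightarrow> bool" where
  "validIdx Els p b = (case b of
      BEdge g i s \<Rightarrow> (\<exists>e\<in>Els. g \<in> ge e ` set locEdges) \<and> i < p - 1 \<and> s \<in> {1, 2}
    | BEdgeFace f g i r \<Rightarrow> (\<exists>e\<in>Els. \<exists>k\<in>set locFaces. gf e k = f \<and> g \<in> ge e ` faceEdges k)
                           \<and> i < p - 1 \<and> r < 3
    | BFace f i r \<Rightarrow> (\<exists>e\<in>Els. f \<in> gf e ` set locFaces) \<and> i < (p - 2) * (p - 1) div 2 \<and> r < 5
    | BCellE e g i \<Rightarrow> e \<in> Els \<and> g \<in> ge e ` set locEdges \<and> i < Suc p - 1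
    | BCellF e f i \<Rightarrow> e \<in> Els \<and> f \<in> gf e ` set locFaces \<and> i < (Suc p - 2) * (Suc p - 1) div 2
    | BCellC e i \<Rightarrow> e \<in> Els \<and> i < (Suc p - 3) * (Suc p - 2) * (Suc p - 1) div 6
    | BCellFN e k i r \<Rightarrow> e \<in> Els \<and> k \<in> set locFaces \<and> i < (p - 2) * (p - 1) div 2 \<and> r < 3
    | BCellSl e i M \<Rightarrow> e \<in> Els \<and> i < (p - 3) * (p - 2) * (p - 1) div 6 \<and> trace M = 0)"

definition faceTensor :: "(nat \<Rightarrow> vec3) \<Rightarrow> elem \<Rightarrow> nat \<times> nat \<times> nat \<Rightarrow> nat \<Rightarrow> mat3" where
  "faceTensor X e k r = (let j = minEdge k; t = tvec X e j; m = mvec X e k j; n = nvec X e k in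
     (if r = 0 then outer t m else if r = 1 then outer m t
      else if r = 2 then outer t t - outer m m else if r = 3 then outer n t else outer n m))"

text \<open>value at x of the restriction to element e of the assembled basis function b\<close>
definition bval ::
  "(nat \<Rightarrow> vec3) \<Rightarrow> nat \<Rightarrow> (nat \<Rightarrow> nat \<times> nat \<Rightarrow> nat \<Rightarrow> vec3 \<Rightarrow> real)
   \<Rightarrow> (nat \<Rightarrow> nat \<times> nat \<times> nat \<Rightarrow> nat \<Rightarrow> vec3 \<Rightarrow> real) \<Rightarrow> (nat \<Rightarrow> elem \<Rightarrow> nat \<Rightarrow> vec3 \<Rightarrow> real)
   \<Rightarrow> bidx \<Rightarrow> elem \<Rightarrow> vec3 \<Rightarrow> mat3" where
  "bval X p edgeFun faceFun cellFun b e x = (case b of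
      BEdge g i s \<Rightarrow> (\<Sum>j\<in>{j\<in>set locEdges. ge e j = g}.
          edgeFun p g i x *\<^sub>R outer (if s = 1 then d1vec (tvec X e j) else d2vec (tvec X e j)) (tvec X e j))
    | BEdgeFace f g i r \<Rightarrow> (\<Sum>k\<in>{k\<in>set locFaces. gf e k = f}. \<Sum>j\<in>{j\<in>faceEdges k. ge e j = g}.
          edgeFun p g i x *\<^sub>R outer (if r = 0 then tvec X e j else if r = 1 then mvec X e k j else nvec X e k)
                                   (kvec X e k j))
    | BFace f i r \<Rightarrow> (\<Sum>k\<in>{k\<in>set locFaces. gf e k = f}. faceFun p f i x *\<^sub>R faceTensor X e k r)
    | BCellE e' g i \<Rightarrow> (if e' = e then edgeFun (Suc p) g i x *\<^sub>R mat 1 else 0)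
    | BCellF e' f i \<Rightarrow> (if e' = e then faceFun (Suc p) f i x *\<^sub>R mat 1 else 0)
    | BCellC e' i \<Rightarrow> (if e' = e then cellFun (Suc p) e i x *\<^sub>R mat 1 else 0)
    | BCellFN e' k i r \<Rightarrow> (if e' = e then
          faceFun p (gf e k) i x *\<^sub>R outer (if r = 0 then tvec X e (minEdge k)
               else if r = 1 then mvec X e k (minEdge k) else nvec X e k) (nvec X e k) else 0)
    | BCellSl e' i M \<Rightarrow> (if e' = e then cellFun p e i x *\<^sub>R M else 0))"

definition fieldOn ::
  "(nat \<Rightarrow> vec3) \<Rightarrow> nat \<Rightarrow> (nat \<Rightarrow> nat \<times> nat \<Rightarrow> nat \<Rightarrow> vec3 \<Rightarrow> real)
   \<Rightarrow> (nat \<Rightarrow> nat \<times> nat \<times> nat \<Rightarrow> nat \<Rightarrow> vec3 \<Rightarrow> real) \<Rightarrow> (nat \<Rightarrow> elem \<Rightarrow> nat \<Rightarrow> vec3 \<Rightarrow> real)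
   \<Rightarrow> (bidx \<Rightarrow> real) \<Rightarrow> elem \<Rightarrow> vec3 \<Rightarrow> mat3" where
  "fieldOn X p edgeFun faceFun cellFun c e x =
     (\<Sum>b\<in>{b. c b \<noteq> 0}. c b *\<^sub>R bval X p edgeFun faceFun cellFun b e x)"

end

theory Submission
  imports Defs
begin

(* On an interior face F shared by elements T and T', the tangential trace sym(P Anti(n)^T) of every
   assembled basis function can be written in terms of the global vertex positions alone, so it is
   the same seen from T and from T'. Orientation makes the element tangents t = X b - X a and the
   face normals n = t_ab x t_ac of shared edges and faces coincide. Since a (x) k Anti(n)^T =
   a (x) (n x k), the edge-face vector of an edge of F enters only through n x k = t, whence also
   m = Qk = -n x t; for a face other than F either k is parallel to the normal of F or the edge lies
   off F and its scalar function vanishes on the neighbour. Face functions of other faces vanish on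
   F, cell functions phi T vanish on the boundary, and the remaining cell functions have zero trace:
   phi 1 because Anti(n) is skew, phi a (x) n because n x n = 0. *)

lemma vec3_nth [simp]: "vec3 a b c $ 1 = a" "vec3 a b c $ 2 = b" "vec3 a b c $ 3 = c"
  by (simp_all add: vec3_def)

lemma vec3_eq_iff: "(x::vec3) = y \<longleftrightarrow> x$1 = y$1 \<and> x$2 = y$2 \<and> x$3 = y$3"
  by (simp add: vec_eq_iff forall_3)

lemma vec3_arith [simp]:
  "vec3 a b c + vec3 a' b' c' = vec3 (a + a') (b + b') (c + c')"
  "vec3 a b c - vec3 a' b' c' = vec3 (a - a') (b - b') (c - c')"
  "- vec3 a b c = vec3 (- a) (- b) (- c)"
  "vec3 a b c = vec3 a' b' c' \<longleftrightarrow> a = a' \<and> b = b' \<and> c = c'"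
  "vec3 a b c = 0 \<longleftrightarrow> a = 0 \<and> b = 0 \<and> c = 0"
  "cross3 (vec3 a b c) (vec3 a' b' c') = vec3 (b * c' - c * b') (c * a' - a * c') (a * b' - b * a')"
  by (auto simp: vec3_eq_iff cross3_def)

lemma matrix_inv_det_nz:
  fixes J :: "real^3^3"
  assumes "det J \<noteq> 0"
  shows matrix_inv_right: "J ** matrix_inv J = mat 1"
    and matrix_inv_left: "matrix_inv J ** J = mat 1"
proof -
  have "\<exists>A'. J ** A' = mat 1 \<and> A' ** J = mat 1"
    using assms invertible_det_nz invertible_def by blast
  then have "J ** matrix_inv J = mat 1 \<and> matrix_inv J ** J = mat 1"
    unfolding matrix_inv_def by (rule someI_ex)
  then show "J ** matrix_inv J = mat 1" "matrix_inv J ** J = mat 1" by auto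
qed

lemma matrix_vector_mult_eq_0_iff_det_nz:
  fixes J :: "real^3^3"
  shows "det J \<noteq> 0 \<Longrightarrow> J *v y = 0 \<longleftrightarrow> y = 0"
  by (metis matrix_inv_left matrix_vector_mul_assoc matrix_vector_mul_lid matrix_vector_mult_0_right)

lemma cross_matrix_mult_inverse_transpose:
  fixes J :: "real^3^3"
  assumes "det J \<noteq> 0"
  shows "cross3 (J *v a) (J *v b) = det J *\<^sub>R (transpose (matrix_inv J) *v cross3 a b)"
proof -
  have "transpose (matrix_inv J) ** transpose J = mat 1"
    using matrix_inv_right[OF assms] by (metis matrix_transpose_mul transpose_mat)
  then have "cross3 (J *v a) (J *v b)
      = transpose (matrix_inv J) *v (transpose J *v cross3 (J *v a) (J *v b))"
    by (metis matrix_vector_mul_assoc matrix_vector_mul_lid)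
  then show ?thesis
    by (simp only: cross_matrix_mult matrix_vector_mult_scaleR)
qed

lemma cross_cofactor_inverse_transpose:
  fixes J :: "real^3^3"
  assumes "det J \<noteq> 0"
  shows "cross3 (det J *\<^sub>R (transpose (matrix_inv J) *v a)) (transpose (matrix_inv J) *v b)
       = J *v cross3 a b"
proof -
  define G where "G = transpose (matrix_inv J)"
  have "det J * det G = 1"
    using matrix_inv_right[OF assms] by (metis G_def det_I det_mul det_transpose)
  moreover have "cross3 (G *v a) (G *v b) = J *v (matrix_inv J *v cross3 (G *v a) (G *v b))"
    by (simp add: matrix_vector_mul_assoc matrix_inv_right[OF assms])
  moreover have "matrix_inv J *v cross3 (G *v a) (G *v b) = det G *\<^sub>R cross3 a b"
    using cross_matrix_mult[of G a b] by (simp add: G_def)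
  ultimately show ?thesis
    by (simp add: G_def[symmetric] cross_mult_left matrix_vector_mult_scaleR)
qed

lemma locEdges_iff:
  "j \<in> set locEdges \<longleftrightarrow> j = (1,2) \<or> j = (1,3) \<or> j = (1,4) \<or> j = (2,3) \<or> j = (2,4) \<or> j = (3,4)"
  by (simp add: locEdges_def)

lemma locFaces_iff:
  "k \<in> set locFaces \<longleftrightarrow> k = (1,2,3) \<or> k = (1,2,4) \<or> k = (1,3,4) \<or> k = (2,3,4)"
  by (simp add: locFaces_def)

lemma faceEdges_subset_locEdges: "k \<in> set locFaces \<Longrightarrow> faceEdges k \<subseteq> set locEdges"
  unfolding locFaces_iff by (elim disjE; simp add: faceEdges_def locEdges_def)

lemma minEdge_in_faceEdges: "minEdge k \<in> faceEdges k"
  by (simp add: minEdge_def faceEdges_def split: prod.split)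

text \<open>The edge-face vectors of an edge are, up to sign, the reference normals of the two faces
  containing it; kappaSel picks the one belonging to the other face.\<close>

definition kappaSel :: "nat \<times> nat \<times> nat \<Rightarrow> nat \<times> nat \<Rightarrow> vec3" where
  "kappaSel k j = (if cross3 (nuRef k) (fst (kappaRef j)) \<noteq> 0 then fst (kappaRef j) else snd (kappaRef j))"

lemma cross_nuRef_kappaSel:
  "k \<in> set locFaces \<Longrightarrow> j \<in> faceEdges k \<Longrightarrow> cross3 (nuRef k) (kappaSel k j) = tauRef j"
  unfolding locFaces_iff
  by (elim disjE; simp add: faceEdges_def; elim disjE;
      simp add: kappaSel_def nuRef_def kappaRef_def tauRef_def e1v_def e2v_def e3v_def)

lemma cross_nuRef_other_face_kappaSel:
  "k \<in> set locFaces \<Longrightarrow> k' \<in> set locFaces \<Longrightarrow> k \<noteq> k' \<Longrightarrow> j \<in> faceEdges k \<Longrightarrow> j \<in> faceEdges k'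
   \<Longrightarrow> cross3 (nuRef k') (kappaSel k j) = 0"
  unfolding locFaces_iff
  by (elim disjE; simp add: faceEdges_def; elim disjE;
      simp add: kappaSel_def nuRef_def kappaRef_def tauRef_def e1v_def e2v_def e3v_def)

lemma cross_tauRef_eq_nuRef:
  "(a,b,c) \<in> set locFaces \<Longrightarrow> cross3 (tauRef (a,b)) (tauRef (a,c)) = nuRef (a,b,c)"
  unfolding locFaces_iff by (elim disjE; simp add: nuRef_def tauRef_def e1v_def e2v_def e3v_def)

definition edgeTangent :: "(nat \<Rightarrow> vec3) \<Rightarrow> nat \<times> nat \<Rightarrow> vec3" where
  "edgeTangent X g = X (snd g) - X (fst g)"

definition faceNormal :: "(nat \<Rightarrow> vec3) \<Rightarrow> nat \<times> nat \<times> nat \<Rightarrow> vec3" where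
  "faceNormal X F = (case F of (a, b, c) \<Rightarrow> cross3 (X b - X a) (X c - X a))"

lemma Jmat_mult:
  "Jmat X e *v w = w$1 *\<^sub>R (X (gv e 4) - X (gv e 1)) + w$2 *\<^sub>R (X (gv e 3) - X (gv e 1))
     + w$3 *\<^sub>R (X (gv e 2) - X (gv e 1))"
  by (simp add: Jmat_def vec_eq_iff matrix_vector_mult_def transpose_def sum_3 vector_def forall_3
      algebra_simps)

lemma tvec_eq_edgeTangent: "j \<in> set locEdges \<Longrightarrow> tvec X e j = edgeTangent X (ge e j)"
  unfolding locEdges_iff tvec_def Jmat_mult
  by (elim disjE; simp add: tauRef_def e1v_def e2v_def e3v_def edgeTangent_def ge_def vec_eq_iff
      forall_3 algebra_simps)

lemma nvec_eq_cross_tvec: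
  "det (Jmat X e) \<noteq> 0 \<Longrightarrow> (a,b,c) \<in> set locFaces \<Longrightarrow>
   nvec X e (a,b,c) = cross3 (tvec X e (a,b)) (tvec X e (a,c))"
  by (simp add: tvec_def cross_matrix_mult_inverse_transpose cross_tauRef_eq_nuRef nvec_def)

lemma nvec_eq_faceNormal:
  assumes "det (Jmat X e) \<noteq> 0" and "k \<in> set locFaces"
  shows "nvec X e k = faceNormal X (gf e k)"
proof -
  obtain a b c where k: "k = (a,b,c)" by (cases k)
  have "(a,b) \<in> set locEdges" "(a,c) \<in> set locEdges"
    using faceEdges_subset_locEdges[OF assms(2)] by (auto simp: k faceEdges_def)
  then show ?thesis
    using assms by (simp add: k nvec_eq_cross_tvec tvec_eq_edgeTangent edgeTangent_def
        faceNormal_def gf_def ge_def)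
qed

lemma kvec_eq_kappaSel:
  "det (Jmat X e) \<noteq> 0 \<Longrightarrow> kvec X e k j = transpose (matrix_inv (Jmat X e)) *v kappaSel k j"
  by (simp add: kvec_def Let_def kappaSel_def nvec_def cross_cofactor_inverse_transpose
      matrix_vector_mult_eq_0_iff_det_nz del: transpose_matrix_vector)

lemma cross_nvec_kvec:
  "det (Jmat X e) \<noteq> 0 \<Longrightarrow> k \<in> set locFaces \<Longrightarrow> j \<in> faceEdges k \<Longrightarrow>
   cross3 (nvec X e k) (kvec X e k j) = tvec X e j"
  by (simp add: kvec_eq_kappaSel nvec_def cross_cofactor_inverse_transpose cross_nuRef_kappaSel tvec_def
      del: transpose_matrix_vector)

lemma cross_nvec_other_face_kvec:
  "det (Jmat X e) \<noteq> 0 \<Longrightarrow> k \<in> set locFaces \<Longrightarrow> k' \<in> set locFaces \<Longrightarrow> k \<noteq> k' \<Longrightarrow>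
   j \<in> faceEdges k \<Longrightarrow> j \<in> faceEdges k' \<Longrightarrow> cross3 (nvec X e k') (kvec X e k j) = 0"
  by (simp add: kvec_eq_kappaSel nvec_def cross_cofactor_inverse_transpose
      cross_nuRef_other_face_kappaSel del: transpose_matrix_vector)

lemma Qmat_mult_eq_cross: "Qmat n *v v = - cross3 n (cross3 n v)"
  by (simp add: Qmat_def outer_def vec_eq_iff forall_3 cross3_def matrix_vector_mult_def sum_3
      norm_vec_def L2_set_def power2_eq_square algebra_simps mat_def)

lemma mvec_eq_cross_tvec:
  "det (Jmat X e) \<noteq> 0 \<Longrightarrow> k \<in> set locFaces \<Longrightarrow> j \<in> faceEdges k \<Longrightarrow>
   mvec X e k j = - cross3 (nvec X e k) (tvec X e j)"
  by (simp add: mvec_def Qmat_mult_eq_cross cross_nvec_kvec)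

definition oriented :: "elem \<Rightarrow> bool" where
  "oriented e \<longleftrightarrow> gv e 1 < gv e 2 \<and> gv e 2 < gv e 3 \<and> gv e 3 < gv e 4"

lemma oriented_conforming_meshD:
  "oriented_conforming_mesh X Els \<Longrightarrow> e \<in> Els \<Longrightarrow> oriented e \<and> det (Jmat X e) \<noteq> 0"
  unfolding oriented_conforming_mesh_def oriented_def by blast

lemma inj_on_ge: "oriented e \<Longrightarrow> inj_on (ge e) (set locEdges)"
  by (cases e) (auto simp: inj_on_def locEdges_def ge_def gv_def oriented_def)

lemma inj_on_gf: "oriented e \<Longrightarrow> inj_on (gf e) (set locFaces)"
  by (cases e) (auto simp: inj_on_def locFaces_def gf_def gv_def oriented_def)

lemma ge_image_faceEdges: "ge e ` faceEdges k = faceEdges (gf e k)"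
  by (cases k) (simp add: ge_def gf_def faceEdges_def)

lemma ge_minEdge: "ge e (minEdge k) = minEdge (gf e k)"
  by (cases k) (simp add: ge_def gf_def minEdge_def)

definition faceVerts :: "nat \<times> nat \<times> nat \<Rightarrow> nat set" where
  "faceVerts F = (case F of (a, b, c) \<Rightarrow> {a, b, c})"

lemma faceVerts_subset_vertsOf: "k \<in> set locFaces \<Longrightarrow> faceVerts (gf e k) \<subseteq> vertsOf e"
  unfolding locFaces_iff by (elim disjE; simp add: faceVerts_def gf_def vertsOf_def)

lemma ge_in_vertsOf: "j \<in> set locEdges \<Longrightarrow> fst (ge e j) \<in> vertsOf e \<and> snd (ge e j) \<in> vertsOf e"
  unfolding locEdges_iff by (elim disjE; simp add: ge_def vertsOf_def)

lemma vertsOf_eq_faceVerts_union_edge: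
  "k \<in> set locFaces \<Longrightarrow> j \<in> set locEdges \<Longrightarrow> j \<notin> faceEdges k \<Longrightarrow>
   vertsOf e = faceVerts (gf e k) \<union> {fst (ge e j), snd (ge e j)}"
  unfolding locFaces_iff locEdges_iff
  by (elim disjE; simp add: faceEdges_def faceVerts_def gf_def ge_def vertsOf_def; blast)

lemma oriented_eq_if_vertsOf_eq:
  assumes "oriented e" "oriented e'" "vertsOf e = vertsOf e'"
  shows "e = e'"
proof -
  have "[gv e 1, gv e 2, gv e 3, gv e 4] = [gv e' 1, gv e' 2, gv e' 3, gv e' 4]"
    using assms by (intro strict_sorted_equal) (auto simp: oriented_def vertsOf_def)
  then show ?thesis
    by (cases e; cases e') (simp add: gv_def)
qed

text \<open>An edge off the shared face contains the vertex opposite to it, so a neighbour having this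
  edge as well has all the vertices of the element.\<close>

lemma oriented_eq_if_shared_face_and_edge_off_face:
  assumes "oriented e" "oriented e'" "k \<in> set locFaces" "k' \<in> set locFaces" "gf e k = gf e' k'"
    and "j \<in> set locEdges" "j \<notin> faceEdges k" "j' \<in> set locEdges" "ge e j = ge e' j'"
  shows "e = e'"
proof -
  have "vertsOf e \<subseteq> vertsOf e'"
    using vertsOf_eq_faceVerts_union_edge[OF assms(3,6,7)] faceVerts_subset_vertsOf[OF assms(4)]
      ge_in_vertsOf[OF assms(8)] assms(5,9) by auto
  moreover have "card (vertsOf e) = 4" "card (vertsOf e') = 4"
    using assms(1,2) by (auto simp: oriented_def vertsOf_def)
  ultimately have "vertsOf e = vertsOf e'"
    by (intro card_subset_eq) (auto simp: vertsOf_def)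
  then show ?thesis
    using assms(1,2) oriented_eq_if_vertsOf_eq by blast
qed

definition tangentialTrace :: "vec3 \<Rightarrow> mat3 \<Rightarrow> mat3" where
  "tangentialTrace n P = symm (P ** transpose (Anti n))"

lemma linear_tangentialTrace: "linear (tangentialTrace n)"
  by (rule linearI)
     (simp_all add: tangentialTrace_def symm_def vec_eq_iff matrix_matrix_mult_def transpose_def
       sum.distrib sum_distrib_left algebra_simps)

lemma outer_mult_transpose_Anti: "outer a b ** transpose (Anti n) = outer a (cross3 n b)"
  by (simp add: vec_eq_iff forall_3 matrix_matrix_mult_def sum_3 transpose_def outer_def Anti_def
      cross3_def algebra_simps)

lemma tangentialTrace_outer: "tangentialTrace n (outer a b) = symm (outer a (cross3 n b))"
  by (simp add: tangentialTrace_def outer_mult_transpose_Anti)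

lemma tangentialTrace_outer_normal: "tangentialTrace n (outer a n) = 0"
  unfolding tangentialTrace_outer cross_refl by (simp add: outer_def symm_def vec_eq_iff transpose_def)

lemma tangentialTrace_scaled_identity: "tangentialTrace n (c *\<^sub>R mat 1) = 0"
proof -
  have "tangentialTrace n (mat 1) = 0"
    by (simp add: tangentialTrace_def symm_def vec_eq_iff forall_3 transpose_def Anti_def)
  then show ?thesis
    by (simp add: linear_scale[OF linear_tangentialTrace])
qed

lemma faceSet_subset_tet: "k \<in> set locFaces \<Longrightarrow> faceSet X (gf e k) \<subseteq> tet X e"
  unfolding locFaces_iff tet_def
  by (elim disjE; simp add: faceSet_def gf_def; rule hull_mono; blast)

lemma hier_basis_edgeFun_vanishes_off_elem:
  "hier_basis X Els q eF fF cF \<Longrightarrow> e \<in> Els \<Longrightarrow> g \<notin> ge e ` set locEdges \<Longrightarrow> x \<in> tet X e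
   \<Longrightarrow> eF q g i x = 0"
  unfolding hier_basis_def by blast

lemma hier_basis_faceFun_vanishes_on_other_face:
  "hier_basis X Els q eF fF cF \<Longrightarrow> e \<in> Els \<Longrightarrow> k \<in> set locFaces \<Longrightarrow> k' \<in> set locFaces
   \<Longrightarrow> k' \<noteq> k \<Longrightarrow> i < (q - 2) * (q - 1) div 2 \<Longrightarrow> x \<in> faceSet X (gf e k') \<Longrightarrow> fF q (gf e k) i x = 0"
  unfolding hier_basis_def by blast

lemma hier_basis_cellFun_vanishes_on_face:
  "hier_basis X Els q eF fF cF \<Longrightarrow> e \<in> Els \<Longrightarrow> k \<in> set locFaces
   \<Longrightarrow> i < (q - 3) * (q - 2) * (q - 1) div 6 \<Longrightarrow> x \<in> faceSet X (gf e k) \<Longrightarrow> cF q e i x = 0"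
  unfolding hier_basis_def by blast

definition faceTensorOf :: "vec3 \<Rightarrow> vec3 \<Rightarrow> nat \<Rightarrow> mat3" where
  "faceTensorOf t n r = (let m = - cross3 n t in
     if r = 0 then outer t m else if r = 1 then outer m t else if r = 2 then outer t t - outer m m
     else if r = 3 then outer n t else outer n m)"

lemma faceTensor_eq_faceTensorOf:
  assumes "det (Jmat X e) \<noteq> 0" "k \<in> set locFaces"
  shows "faceTensor X e k r
       = faceTensorOf (edgeTangent X (minEdge (gf e k))) (faceNormal X (gf e k)) r"
proof -
  have "minEdge k \<in> set locEdges"
    using minEdge_in_faceEdges faceEdges_subset_locEdges[OF assms(2)] by blast
  then have "tvec X e (minEdge k) = edgeTangent X (minEdge (gf e k))"
    by (simp add: tvec_eq_edgeTangent ge_minEdge)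
  then show ?thesis
    using assms by (simp add: faceTensor_def faceTensorOf_def Let_def mvec_eq_cross_tvec
        minEdge_in_faceEdges nvec_eq_faceNormal)
qed

definition interfaceTrace ::
  "(nat \<Rightarrow> vec3) \<Rightarrow> nat \<Rightarrow> (nat \<Rightarrow> nat \<times> nat \<Rightarrow> nat \<Rightarrow> vec3 \<Rightarrow> real)
   \<Rightarrow> (nat \<Rightarrow> nat \<times> nat \<times> nat \<Rightarrow> nat \<Rightarrow> vec3 \<Rightarrow> real)
   \<Rightarrow> nat \<times> nat \<times> nat \<Rightarrow> vec3 \<Rightarrow> bidx \<Rightarrow> mat3"
  where
  "interfaceTrace X p eF fF F x b = (let n = faceNormal X F in case b of
      BEdge g i s \<Rightarrow> (let t = edgeTangent X g in
        tangentialTrace n (eF p g i x *\<^sub>R outer (if s = 1 then d1vec t else d2vec t) t))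
    | BEdgeFace f g i r \<Rightarrow> (let t = edgeTangent X g in
        if f = F \<and> g \<in> faceEdges F
        then eF p g i x *\<^sub>R symm (outer (if r = 0 then t else if r = 1 then - cross3 n t else n) t)
        else 0)
    | BFace f i r \<Rightarrow>
        if f = F then fF p F i x *\<^sub>R tangentialTrace n (faceTensorOf (edgeTangent X (minEdge F)) n r)
        else 0
    | _ \<Rightarrow> 0)"

lemma tangentialTrace_bval_BEdgeFace_sum:
  "tangentialTrace n (bval X p eF fF cF (BEdgeFace f g i r) e x) =
     (\<Sum>k\<in>{k \<in> set locFaces. gf e k = f}. \<Sum>j\<in>{j \<in> faceEdges k. ge e j = g}.
        eF p g i x *\<^sub>R symm (outer (if r = 0 then tvec X e j else if r = 1 then mvec X e k j else nvec X e k)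
                                  (cross3 n (kvec X e k j))))"
  by (simp add: bval_def linear_sum[OF linear_tangentialTrace] linear_scale[OF linear_tangentialTrace]
      tangentialTrace_outer)

context
  fixes X :: "nat \<Rightarrow> vec3" and Els :: "elem set" and p :: nat
    and eF :: "nat \<Rightarrow> nat \<times> nat \<Rightarrow> nat \<Rightarrow> vec3 \<Rightarrow> real"
    and fF :: "nat \<Rightarrow> nat \<times> nat \<times> nat \<Rightarrow> nat \<Rightarrow> vec3 \<Rightarrow> real"
    and cF :: "nat \<Rightarrow> elem \<Rightarrow> nat \<Rightarrow> vec3 \<Rightarrow> real"
    and e e' :: elem and k k' F :: "nat \<times> nat \<times> nat" and x :: vec3
  assumes mesh: "oriented_conforming_mesh X Els"
    and basis: "hier_basis X Els p eF fF cF"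
    and elems: "e \<in> Els" "e' \<in> Els" "e \<noteq> e'"
    and faces: "k \<in> set locFaces" "k' \<in> set locFaces" "gf e k = F" "gf e' k' = F"
    and x: "x \<in> faceSet X F"
begin

lemma oriented_elems: "oriented e" "oriented e'" "det (Jmat X e) \<noteq> 0"
  using oriented_conforming_meshD[OF mesh] elems by auto

lemma x_in_tets: "x \<in> tet X e" "x \<in> tet X e'"
  using faceSet_subset_tet[OF faces(1), of X e] faceSet_subset_tet[OF faces(2), of X e'] x faces(3,4)
  by auto

lemma nvec_shared_face: "nvec X e k = faceNormal X F"
  using nvec_eq_faceNormal[OF oriented_elems(3) faces(1)] faces(3) by simp

lemma tangentialTrace_bval_BEdge:
  "tangentialTrace (faceNormal X F) (bval X p eF fF cF (BEdge g i s) e x)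
   = interfaceTrace X p eF fF F x (BEdge g i s)"
proof (cases "g \<in> ge e ` set locEdges")
  case True
  then obtain j where j: "j \<in> set locEdges" "ge e j = g" by auto
  moreover have "{j' \<in> set locEdges. ge e j' = g} = {j}"
    using j inj_on_ge[OF oriented_elems(1)] by (auto dest: inj_onD)
  ultimately show ?thesis
    by (simp add: bval_def interfaceTrace_def Let_def tvec_eq_edgeTangent)
next
  case False
  then have "{j \<in> set locEdges. ge e j = g} = {}" by auto
  moreover have "eF p g i x = 0"
    using hier_basis_edgeFun_vanishes_off_elem[OF basis elems(1) False x_in_tets(1)] .
  ultimately show ?thesis
    by (simp add: bval_def interfaceTrace_def linear_0[OF linear_tangentialTrace])
qed

lemma edgeFace_term_vanishes_off_shared_face:
  assumes "k0 \<in> set locFaces" "gf e k0 \<noteq> F" "j \<in> faceEdges k0" "ge e j = g"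
  shows "eF p g i x *\<^sub>R symm (outer a (cross3 (faceNormal X F) (kvec X e k0 j))) = 0"
proof -
  have other_face: "k0 \<noteq> k" using assms(2) faces(3) by auto
  have "eF p (ge e j) i x = 0 \<or> cross3 (faceNormal X F) (kvec X e k0 j) = 0"
  proof (cases "j \<in> faceEdges k")
    case True
    then show ?thesis
      using cross_nvec_other_face_kvec[OF oriented_elems(3) assms(1) faces(1) other_face assms(3)
          True] nvec_shared_face by simp
  next
    case False
    have "ge e j \<notin> ge e' ` set locEdges"
    proof
      assume "ge e j \<in> ge e' ` set locEdges"
      then obtain j' where "j' \<in> set locEdges" "ge e j = ge e' j'" by auto
      moreover have "j \<in> set locEdges"
        using faceEdges_subset_locEdges[OF assms(1)] assms(3) by blast
      ultimately have "e = e'"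
        using oriented_eq_if_shared_face_and_edge_off_face[OF oriented_elems(1,2) faces(1,2) _ _ False]
          faces(3,4) by simp
      with elems(3) show False ..
    qed
    then show ?thesis
      using hier_basis_edgeFun_vanishes_off_elem[OF basis elems(2) _ x_in_tets(2)] by blast
  qed
  then show ?thesis
    using assms(4) by (auto simp: outer_def symm_def vec_eq_iff transpose_def)
qed

lemma tangentialTrace_bval_BEdgeFace:
  "tangentialTrace (faceNormal X F) (bval X p eF fF cF (BEdgeFace f g i r) e x)
   = interfaceTrace X p eF fF F x (BEdgeFace f g i r)"
proof (cases "f = F")
  case True
  then have faces_f: "{k0 \<in> set locFaces. gf e k0 = f} = {k}"
    using inj_on_gf[OF oriented_elems(1)] faces(1,3) by (auto dest: inj_onD)
  show ?thesis
  proof (cases "g \<in> faceEdges F")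
    case True
    then have "g \<in> ge e ` faceEdges k"
      using ge_image_faceEdges[of e k] faces(3) by simp
    then obtain j where j: "j \<in> faceEdges k" "ge e j = g" by blast
    have j_loc: "j \<in> set locEdges"
      using faceEdges_subset_locEdges[OF faces(1)] j by blast
    have edges_g: "{j' \<in> faceEdges k. ge e j' = g} = {j}"
      using inj_on_ge[OF oriented_elems(1)] faceEdges_subset_locEdges[OF faces(1)] j
      by (auto dest: inj_onD)
    have t: "tvec X e j = edgeTangent X g"
      using tvec_eq_edgeTangent[OF j_loc] j by simp
    have "cross3 (faceNormal X F) (kvec X e k j) = edgeTangent X g"
      using cross_nvec_kvec[OF oriented_elems(3) faces(1) j(1)] nvec_shared_face t by simp
    moreover have "mvec X e k j = - cross3 (faceNormal X F) (edgeTangent X g)"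
      using mvec_eq_cross_tvec[OF oriented_elems(3) faces(1) j(1)] nvec_shared_face t by simp
    ultimately show ?thesis
      using True \<open>f = F\<close> unfolding tangentialTrace_bval_BEdgeFace_sum faces_f
      by (simp add: edges_g interfaceTrace_def Let_def t nvec_shared_face)
  next
    case False
    then have "g \<notin> ge e ` faceEdges k"
      using ge_image_faceEdges[of e k] faces(3) by simp
    then have no_edges: "{j \<in> faceEdges k. ge e j = g} = {}" by blast
    show ?thesis
      using False unfolding tangentialTrace_bval_BEdgeFace_sum faces_f
      by (simp add: no_edges interfaceTrace_def)
  qed
next
  case False
  then show ?thesis
    unfolding tangentialTrace_bval_BEdgeFace_sum
    by (auto simp: interfaceTrace_def intro!: sum.neutral edgeFace_term_vanishes_off_shared_face)
qed

lemma tangentialTrace_bval_BFace: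
  assumes "i < (p - 2) * (p - 1) div 2"
  shows "tangentialTrace (faceNormal X F) (bval X p eF fF cF (BFace f i r) e x)
       = interfaceTrace X p eF fF F x (BFace f i r)"
proof (cases "f = F")
  case True
  then have "{k0 \<in> set locFaces. gf e k0 = f} = {k}"
    using inj_on_gf[OF oriented_elems(1)] faces(1,3) by (auto dest: inj_onD)
  then show ?thesis
    using True faces(3) by (simp add: bval_def interfaceTrace_def Let_def linear_scale[OF linear_tangentialTrace]
        faceTensor_eq_faceTensorOf[OF oriented_elems(3) faces(1)])
next
  case False
  have "fF p f i x = 0" if "k0 \<in> set locFaces" "gf e k0 = f" for k0
    using hier_basis_faceFun_vanishes_on_other_face[OF basis elems(1) that(1) faces(1) _ assms]
      that(2) faces(3) x False by auto
  then show ?thesis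
    using False by (auto simp: bval_def interfaceTrace_def linear_sum[OF linear_tangentialTrace]
        linear_scale[OF linear_tangentialTrace] intro!: sum.neutral)
qed

lemma tangentialTrace_bval_BCellFN:
  assumes "k0 \<in> set locFaces" "i < (p - 2) * (p - 1) div 2"
  shows "tangentialTrace (faceNormal X F) (bval X p eF fF cF (BCellFN e0 k0 i r) e x) = 0"
proof (cases "e0 = e \<and> k0 \<noteq> k")
  case True
  then have "fF p (gf e k0) i x = 0"
    using hier_basis_faceFun_vanishes_on_other_face[OF basis elems(1) assms(1) faces(1) _ assms(2)]
      faces(3) x by auto
  then show ?thesis
    using True by (simp add: bval_def linear_0[OF linear_tangentialTrace])
next
  case False
  then show ?thesis
    by (auto simp: bval_def linear_scale[OF linear_tangentialTrace] nvec_shared_face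
        tangentialTrace_outer_normal linear_0[OF linear_tangentialTrace])
qed

lemma tangentialTrace_bval_BCellSl:
  assumes "i < (p - 3) * (p - 2) * (p - 1) div 6"
  shows "tangentialTrace (faceNormal X F) (bval X p eF fF cF (BCellSl e0 i M) e x) = 0"
  using hier_basis_cellFun_vanishes_on_face[OF basis elems(1) faces(1) assms] faces(3) x
  by (simp add: bval_def linear_0[OF linear_tangentialTrace])

lemma tangentialTrace_bval:
  assumes "validIdx Els p b"
  shows "tangentialTrace (faceNormal X F) (bval X p eF fF cF b e x) = interfaceTrace X p eF fF F x b"
  using assms
  by (cases b) (simp_all add: validIdx_def interfaceTrace_def tangentialTrace_bval_BEdge
      tangentialTrace_bval_BEdgeFace tangentialTrace_bval_BFace tangentialTrace_bval_BCellFN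
      tangentialTrace_bval_BCellSl, simp_all add: bval_def tangentialTrace_scaled_identity
      linear_0[OF linear_tangentialTrace])

end

theorem mainTheorem4:
  fixes X :: "nat \<Rightarrow> real^3" and Els :: "elem set" and p :: nat
    and edgeFun :: "nat \<Rightarrow> nat \<times> nat \<Rightarrow> nat \<Rightarrow> real^3 \<Rightarrow> real"
    and faceFun :: "nat \<Rightarrow> nat \<times> nat \<times> nat \<Rightarrow> nat \<Rightarrow> real^3 \<Rightarrow> real"
    and cellFun :: "nat \<Rightarrow> elem \<Rightarrow> nat \<Rightarrow> real^3 \<Rightarrow> real"
    and c :: "bidx \<Rightarrow> real"
  assumes mesh: "oriented_conforming_mesh X Els"
    and p: "p \<ge> 2"
    and basis_p: "hier_basis X Els p edgeFun faceFun cellFun"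
    and basis_p1: "hier_basis X Els (Suc p) edgeFun faceFun cellFun"
    and fin: "finite {b. c b \<noteq> 0}"
    and valid: "\<forall>b. c b \<noteq> 0 \<longrightarrow> validIdx Els p b"
    and interface: "e1 \<in> Els" "e2 \<in> Els" "e1 \<noteq> e2"
      "k1 \<in> set locFaces" "k2 \<in> set locFaces" "gf e1 k1 = gf e2 k2"
    and x: "x \<in> faceSet X (gf e1 k1)"
  shows "symm (fieldOn X p edgeFun faceFun cellFun c e1 x ** transpose (Anti (nvec X e1 k1)))
       = symm (fieldOn X p edgeFun faceFun cellFun c e2 x ** transpose (Anti (nvec X e1 k1)))"
proof -
  define F where "F = gf e1 k1"
  have normal: "nvec X e1 k1 = faceNormal X F"
    using nvec_eq_faceNormal oriented_conforming_meshD[OF mesh interface(1)] interface(4) F_def by blast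
  have same_trace: "tangentialTrace (faceNormal X F) (bval X p edgeFun faceFun cellFun b e1 x)
      = tangentialTrace (faceNormal X F) (bval X p edgeFun faceFun cellFun b e2 x)" if "c b \<noteq> 0" for b
    using tangentialTrace_bval[OF mesh basis_p interface(1-5) F_def[symmetric] _ _]
      tangentialTrace_bval[OF mesh basis_p interface(2,1) interface(3)[symmetric] interface(5,4) _
        F_def[symmetric]]
      interface(6) x valid that F_def by simp
  have "tangentialTrace (faceNormal X F) (fieldOn X p edgeFun faceFun cellFun c e1 x)
      = tangentialTrace (faceNormal X F) (fieldOn X p edgeFun faceFun cellFun c e2 x)"
    unfolding fieldOn_def linear_sum[OF linear_tangentialTrace] linear_scale[OF linear_tangentialTrace]
    using same_trace by simp
  then show ?thesis
    unfolding tangentialTrace_def normal .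
qed

end
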